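(* Let $p$ be an odd prime. If $g\in G$ is a non-identity element of finite order, then $g$ has fewer than $p$ fixed points on $M(\mathbb{F}_p)$.
   Context: $M(\mathbb{F}_p)$ denotes the set of triples $(x,y,z)\in\mathbb{F}_p^3\setminus\{(0,0,0)\}$ satisfying $x^2+y^2+z^2=xyz$. The Markoff moves are the maps $m_1(x,y,z)=(yz-x,y,z)$, $m_2(x,y,z)=(x,xz-y,z)$, $m_3(x,y,z)=(x,y,xy-z)$ on $M(\mathbb{F}_p)$. Let $G=\mathbb{Z}/2*\mathbb{Z}/2*\mathbb{Z}/2$ be the free product with generators $m_1,m_2,m_3$; it acts on $M(\mathbb{F}_p)$ with $m_i$ acting by the $i$-th Markoff move. *)

theory Defs
  imports "HOL-Algebra.Group" "HOL-Computational_Algebra.Primes"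
begin

text \<open>Elements of G are reduced words in the letters 1, 2, 3 (standing for m1, m2, m3):
  lists over {1,2,3} with no two adjacent letters equal.\<close>

definition reduced_word :: "nat list \<Rightarrow> bool" where
  "reduced_word w \<longleftrightarrow> set w \<subseteq> {1,2,3} \<and> successively (\<noteq>) w"

fun push_letter :: "nat \<Rightarrow> nat list \<Rightarrow> nat list" where
  "push_letter a [] = [a]"
| "push_letter a (b # bs) = (if a = b then bs else a # b # bs)"

definition reduce_word :: "nat list \<Rightarrow> nat list" where
  "reduce_word xs = foldr push_letter xs []"

definition markoff_group :: "nat list monoid" where
  "markoff_group = \<lparr> carrier = {w. reduced_word w},
                     monoid.mult = (\<lambda>v w. reduce_word (v @ w)),
                     monoid.one = [] \<rparr>"

text \<open>F_p is represented by the residues {0..<p} of int, arithmetic taken mod p.\<close>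

definition markoff_set :: "int \<Rightarrow> (int \<times> int \<times> int) set" where
  "markoff_set p = {(x, y, z). x \<in> {0..<p} \<and> y \<in> {0..<p} \<and> z \<in> {0..<p}
      \<and> (x, y, z) \<noteq> (0, 0, 0)
      \<and> (x^2 + y^2 + z^2) mod p = (x * y * z) mod p}"

definition markoff_move :: "int \<Rightarrow> nat \<Rightarrow> int \<times> int \<times> int \<Rightarrow> int \<times> int \<times> int" where
  "markoff_move p i = (\<lambda>(x, y, z).
      if i = 1 then ((y * z - x) mod p, y, z)
      else if i = 2 then (x, (x * z - y) mod p, z)
      else if i = 3 then (x, y, (x * y - z) mod p)
      else (x, y, z))"

definition markoff_act :: "int \<Rightarrow> nat list \<Rightarrow> int \<times> int \<times> int \<Rightarrow> int \<times> int \<times> int" where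
  "markoff_act p w = foldr (\<lambda>i f. markoff_move p i \<circ> f) w id"

end

theory Submission
  imports Defs "HOL-Number_Theory.Modular_Inverse"
begin

text \<open>A reduced word of finite order in \<open>\<int>/2 * \<int>/2 * \<int>/2\<close> is a conjugate \<open>u m\<^sub>i u\<inverse>\<close> of a
  generator, since otherwise its middle part is cyclically reduced and its powers grow. Conjugation
  preserves the number of fixed points, and so does the coordinate permutation carrying \<open>m\<^sub>i\<close> to
  \<open>m\<^sub>1\<close>. A triple \<open>(a, b, c)\<close> fixed by \<open>m\<^sub>1\<close> satisfies \<open>bc = 2a\<close>, hence lies on the conic
  \<open>4b\<^sup>2 + 4c\<^sup>2 = b\<^sup>2c\<^sup>2\<close> with \<open>b, c \<noteq> 0\<close>. With \<open>t = 2b/c\<close> this reads \<open>(b - t)(b + t) = 4\<close>, so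
  \<open>b - t\<close> is a unit of \<open>\<bbbF>\<^sub>p\<close> from which \<open>b\<close>, \<open>t\<close>, \<open>c\<close> and \<open>a\<close> can be recovered: there are at most
  \<open>p - 1\<close> such triples.\<close>

section \<open>Reduced words\<close>

lemma foldr_push_letter_rev_cancel: "foldr push_letter (rev u) (u @ w) = w"
  by (induct u) auto

lemma foldr_push_letter_reduced: "successively (\<noteq>) (v @ w) \<Longrightarrow> foldr push_letter v w = v @ w"
proof (induct v)
  case (Cons a v)
  then have "successively (\<noteq>) (v @ w)" by (cases "v @ w") auto
  with Cons show ?case by (cases "v @ w") auto
qed simp

lemma reduce_word_append: "reduce_word (v @ w) = foldr push_letter v (reduce_word w)"
  by (simp add: reduce_word_def)

lemma reduce_word_reduced: "successively (\<noteq>) w \<Longrightarrow> reduce_word w = w"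
  using foldr_push_letter_reduced[of w "[]"] by (simp add: reduce_word_def)

lemma successively_palindromic_decomposition:
  assumes "successively (\<noteq>) g" "g \<noteq> []"
  shows "\<exists>u c. g = u @ c @ rev u \<and> c \<noteq> [] \<and> (length c = 1 \<or> hd c \<noteq> last c)"
  using assms
proof (induct "length g" arbitrary: g rule: less_induct)
  case less
  show ?case
  proof (cases "length g = 1 \<or> hd g \<noteq> last g")
    case True
    with less.prems show ?thesis by (intro exI[of _ "[]"] exI[of _ g]) auto
  next
    case False
    with less.prems obtain a m where g: "g = a # m @ [a]"
      by (cases g rule: rev_cases) (auto simp: neq_Nil_conv)
    with less.prems(1) have "m \<noteq> []" "successively (\<noteq>) m"
      by (auto simp: successively_append_iff successively_Cons)
    with less.hyps[of m] g obtain u c where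
      "m = u @ c @ rev u" "c \<noteq> []" "length c = 1 \<or> hd c \<noteq> last c" by auto
    with g show ?thesis by (intro exI[of _ "a # u"] exI[of _ c]) auto
  qed
qed

lemma markoff_group_pow_0: "g [^]\<^bsub>markoff_group\<^esub> (0::nat) = []"
  by (simp add: markoff_group_def)

lemma markoff_group_pow_Suc:
  "g [^]\<^bsub>markoff_group\<^esub> Suc k = reduce_word (g [^]\<^bsub>markoff_group\<^esub> k @ g)"
  by (simp add: nat_pow_def markoff_group_def)

lemma successively_concat_replicate:
  assumes "successively (\<noteq>) c" "c \<noteq> []" "hd c \<noteq> last c"
  shows "successively (\<noteq>) (concat (replicate (Suc k) c)) \<and> concat (replicate (Suc k) c) \<noteq> []
    \<and> hd (concat (replicate (Suc k) c)) = hd c \<and> last (concat (replicate (Suc k) c)) = last c"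
proof (induct k)
  case (Suc k)
  have "concat (replicate (Suc (Suc k)) c) = c @ concat (replicate (Suc k) c)" by simp
  with Suc assms show ?case by (auto simp: successively_append_iff hd_append last_append)
qed (use assms in simp)

lemma successively_replace_middle:
  assumes "successively P (xs @ ys @ zs)" "successively P ys'" "ys \<noteq> []" "ys' \<noteq> []"
    "hd ys' = hd ys" "last ys' = last ys"
  shows "successively P (xs @ ys' @ zs)"
proof -
  have parts: "successively P xs" "successively P zs" "xs = [] \<or> P (last xs) (hd ys)"
    "zs = [] \<or> P (last ys) (hd zs)"
    using assms(1,3) by (auto simp: successively_append_iff)
  then have "successively P (ys' @ zs)" using assms(2,4,6) by (simp add: successively_append_iff)
  with parts assms(4,5) show ?thesis by (simp add: successively_append_iff)
qed

lemma markoff_group_pow_conjugate: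
  assumes g: "g = u @ c @ rev u" "successively (\<noteq>) g" and c: "c \<noteq> []" "hd c \<noteq> last c"
  shows "g [^]\<^bsub>markoff_group\<^esub> Suc k = u @ concat (replicate (Suc k) c) @ rev u"
proof (induct k)
  case 0
  show ?case
    unfolding markoff_group_pow_Suc markoff_group_pow_0 using reduce_word_reduced[OF g(2)] g(1) by simp
next
  case (Suc k)
  define X where "X = concat (replicate (Suc k) c)"
  have sc: "successively (\<noteq>) c" using g by (simp add: successively_append_iff)
  have "replicate (Suc (Suc k)) c = replicate (Suc k) c @ [c]"
    by (metis replicate_Suc replicate_append_same)
  then have Xc: "X @ c = concat (replicate (Suc (Suc k)) c)"
    unfolding X_def by (simp only: concat_append concat.simps append_Nil2)
  have "successively (\<noteq>) (concat (replicate (Suc (Suc k)) c))"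
    "concat (replicate (Suc (Suc k)) c) \<noteq> []"
    "hd (concat (replicate (Suc (Suc k)) c)) = hd c"
    "last (concat (replicate (Suc (Suc k)) c)) = last c"
    using successively_concat_replicate[OF sc c, of "Suc k"] by auto
  from successively_replace_middle[OF g(2)[unfolded g(1)] this(1) c(1) this(2-4)]
  have reduced: "successively (\<noteq>) ((u @ X) @ c @ rev u)" unfolding Xc[symmetric] by simp
  have "g [^]\<^bsub>markoff_group\<^esub> Suc (Suc k) = reduce_word ((u @ X @ rev u) @ u @ c @ rev u)"
    unfolding markoff_group_pow_Suc[of g "Suc k"] Suc[folded X_def] using g(1) by simp
  also have "\<dots> = foldr push_letter (u @ X) (foldr push_letter (rev u) (u @ c @ rev u))"
    using reduce_word_reduced[OF g(2)] g(1) by (simp add: reduce_word_append)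
  also have "\<dots> = u @ X @ c @ rev u"
    using foldr_push_letter_reduced[OF reduced] by (simp add: foldr_push_letter_rev_cancel)
  finally show ?case using Xc by simp
qed

lemma markoff_group_torsion_conjugate_generator:
  fixes n :: nat
  assumes g: "g \<in> carrier markoff_group" "g \<noteq> []"
    and n: "n > 0" "g [^]\<^bsub>markoff_group\<^esub> n = []"
  obtains u i where "g = u @ [i] @ rev u" "i \<in> {1, 2, 3}"
proof -
  have sg: "successively (\<noteq>) g" and letters: "set g \<subseteq> {1, 2, 3}"
    using g(1) by (auto simp: markoff_group_def reduced_word_def)
  obtain u c where gc: "g = u @ c @ rev u" and c: "c \<noteq> []" "length c = 1 \<or> hd c \<noteq> last c"
    using successively_palindromic_decomposition[OF sg g(2)] by blast
  have "length c = 1"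
  proof (rule ccontr)
    assume "length c \<noteq> 1"
    with c have cyc: "hd c \<noteq> last c" by simp
    have sc: "successively (\<noteq>) c" using sg gc by (simp add: successively_append_iff)
    have "g [^]\<^bsub>markoff_group\<^esub> Suc (n - 1) = u @ concat (replicate (Suc (n - 1)) c) @ rev u"
      by (rule markoff_group_pow_conjugate[OF gc sg c(1) cyc])
    moreover have "concat (replicate (Suc (n - 1)) c) \<noteq> []"
      using successively_concat_replicate[OF sc c(1) cyc] by blast
    ultimately show False using n by simp
  qed
  then obtain i where "c = [i]" by (cases c) auto
  with gc letters that show thesis by auto
qed

section \<open>The Markoff moves as permutations of \<open>M(\<bbbF>\<^sub>p)\<close>\<close>

lemma markoff_set_iff:
  "(x, y, z) \<in> markoff_set p \<longleftrightarrow> x \<in> {0..<p} \<and> y \<in> {0..<p} \<and> z \<in> {0..<p}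
     \<and> (x, y, z) \<noteq> (0, 0, 0) \<and> (x^2 + y^2 + z^2) mod p = (x * y * z) mod p"
  by (simp add: markoff_set_def)

lemma markoff_set_dvd:
  "(x, y, z) \<in> markoff_set p \<Longrightarrow> p dvd x^2 + y^2 + z^2 - x * y * z"
  by (simp add: markoff_set_iff mod_eq_dvd_iff)

lemma residue_eq_if_dvd_diff:
  "x \<in> {0..<(p::int)} \<Longrightarrow> y \<in> {0..<p} \<Longrightarrow> p dvd x - y \<Longrightarrow> x = y"
  using mod_eq_dvd_iff[of x p y] by simp

lemma markoff_move_1_in_markoff_set:
  assumes "0 < p" and "Q \<in> markoff_set p"
  shows "markoff_move p 1 Q \<in> markoff_set p"
proof -
  obtain a b c where Q: "Q = (a, b, c)" by (cases Q)
  with assms have P: "(a, b, c) \<in> markoff_set p" by simp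
  define a' where "a' = (b * c - a) mod p"
  have d: "p dvd a' - (b * c - a)" unfolding a'_def by (simp add: mod_eq_dvd_iff[symmetric])
  have "a'^2 + b^2 + c^2 - a' * b * c = (a^2 + b^2 + c^2 - a * b * c) + (a' - (b * c - a)) * (a' - a)"
    by (simp add: algebra_simps power2_eq_square)
  also have "p dvd \<dots>" by (rule dvd_add[OF markoff_set_dvd[OF P] dvd_mult2[OF d]])
  finally have "(a'^2 + b^2 + c^2) mod p = (a' * b * c) mod p" by (simp only: mod_eq_dvd_iff)
  moreover have "(a', b, c) \<noteq> (0, 0, 0)"
  proof
    assume "(a', b, c) = (0, 0, 0)"
    moreover from this d have "p dvd a" by simp
    ultimately show False using P residue_eq_if_dvd_diff[of a p 0] by (auto simp: markoff_set_iff)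
  qed
  moreover have "a' \<in> {0..<p}" unfolding a'_def using \<open>0 < p\<close> by simp
  ultimately have "(a', b, c) \<in> markoff_set p" using P by (simp add: markoff_set_iff)
  then show ?thesis by (simp add: Q a'_def markoff_move_def)
qed

lemma markoff_move_1_involutive:
  "P \<in> markoff_set p \<Longrightarrow> markoff_move p 1 (markoff_move p 1 P) = P"
  by (auto simp: markoff_move_def markoff_set_def mod_diff_right_eq)

definition coord_swap :: "nat \<Rightarrow> int \<times> int \<times> int \<Rightarrow> int \<times> int \<times> int" where
  "coord_swap i = (\<lambda>(x, y, z). if i = 2 then (y, x, z) else if i = 3 then (z, y, x) else (x, y, z))"

lemma coord_swap_involutive: "coord_swap i (coord_swap i P) = P"
  by (auto simp: coord_swap_def split: prod.splits)

lemma coord_swap_in_markoff_set: "P \<in> markoff_set p \<Longrightarrow> coord_swap i P \<in> markoff_set p"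
  by (cases P) (auto simp: coord_swap_def markoff_set_def ac_simps)

lemma markoff_move_conj_coord_swap:
  "i \<in> {1, 2, 3} \<Longrightarrow> markoff_move p i = coord_swap i \<circ> markoff_move p 1 \<circ> coord_swap i"
  by (auto simp: markoff_move_def coord_swap_def ac_simps)

lemma markoff_move_in_markoff_set:
  assumes "0 < p" "P \<in> markoff_set p"
  shows "markoff_move p i P \<in> markoff_set p"
proof (cases "i \<in> {1, 2, 3}")
  case True
  show ?thesis unfolding markoff_move_conj_coord_swap[OF True] comp_apply
    by (intro coord_swap_in_markoff_set markoff_move_1_in_markoff_set assms)
qed (use assms in \<open>simp add: markoff_move_def split: prod.split\<close>)

lemma markoff_move_involutive:
  assumes "P \<in> markoff_set p"
  shows "markoff_move p i (markoff_move p i P) = P"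
proof (cases "i \<in> {1, 2, 3}")
  case True
  have "markoff_move p 1 (markoff_move p 1 (coord_swap i P)) = coord_swap i P"
    using assms by (intro markoff_move_1_involutive coord_swap_in_markoff_set)
  then show ?thesis
    unfolding markoff_move_conj_coord_swap[OF True] comp_apply by (simp only: coord_swap_involutive)
qed (simp add: markoff_move_def split: prod.split)

lemma markoff_act_Nil: "markoff_act p [] = id"
  by (simp add: markoff_act_def)

lemma markoff_act_Cons: "markoff_act p (a # w) = markoff_move p a \<circ> markoff_act p w"
  by (simp add: markoff_act_def)

lemma markoff_act_append: "markoff_act p (v @ w) = markoff_act p v \<circ> markoff_act p w"
  by (induct v) (auto simp: markoff_act_def)

lemma markoff_act_in_markoff_set:
  "0 < p \<Longrightarrow> P \<in> markoff_set p \<Longrightarrow> markoff_act p w P \<in> markoff_set p"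
  by (induct w) (auto simp: markoff_act_def markoff_move_in_markoff_set)

lemma markoff_act_rev_cancel:
  "0 < p \<Longrightarrow> P \<in> markoff_set p \<Longrightarrow> markoff_act p (rev u) (markoff_act p u P) = P"
proof (induct u arbitrary: P)
  case (Cons a u)
  have "markoff_act p (rev (a # u)) (markoff_act p (a # u) P)
      = markoff_act p (rev u) (markoff_move p a (markoff_move p a (markoff_act p u P)))"
    by (simp add: markoff_act_append markoff_act_Cons markoff_act_Nil)
  also have "\<dots> = P"
    using Cons markoff_move_involutive[OF markoff_act_in_markoff_set[OF Cons.prems]] by simp
  finally show ?case .
qed (simp add: markoff_act_Nil)

lemma card_fixed_points_conjugate:
  assumes "h \<in> S \<rightarrow> S" "k \<in> S \<rightarrow> S" "f \<in> S \<rightarrow> S"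
    and "\<And>P. P \<in> S \<Longrightarrow> k (h P) = P" "\<And>P. P \<in> S \<Longrightarrow> h (k P) = P"
  shows "card {P \<in> S. (k \<circ> f \<circ> h) P = P} = card {P \<in> S. f P = P}"
proof (rule bij_betw_same_card[of h], rule bij_betw_byWitness[of _ k])
  show "h ` {P \<in> S. (k \<circ> f \<circ> h) P = P} \<subseteq> {P \<in> S. f P = P}"
    using assms by (force simp: Pi_iff)
  show "k ` {P \<in> S. f P = P} \<subseteq> {P \<in> S. (k \<circ> f \<circ> h) P = P}"
    using assms by (force simp: Pi_iff)
qed (use assms in auto)

lemma card_fixed_points_markoff_act_conjugate:
  assumes "0 < p"
  shows "card {P \<in> markoff_set p. markoff_act p (u @ w @ rev u) P = P}
    = card {P \<in> markoff_set p. markoff_act p w P = P}"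
  unfolding markoff_act_append comp_assoc[symmetric]
proof (rule card_fixed_points_conjugate)
  fix P assume "P \<in> markoff_set p"
  then show "markoff_act p u (markoff_act p (rev u) P) = P"
    using markoff_act_rev_cancel[OF assms, of P "rev u"] by simp
qed (use markoff_act_in_markoff_set[OF assms] markoff_act_rev_cancel[OF assms] in auto)

section \<open>Fixed points of a single move\<close>

lemma prime_odd_not_dvd_2:
  assumes "prime (p::int)" "odd p"
  shows "\<not> p dvd 2"
  using assms zdvd_imp_le[of p 2] prime_ge_2_int[of p] by (cases "p = 2") auto

lemma prime_odd_not_dvd_4:
  assumes "prime (p::int)" "odd p"
  shows "\<not> p dvd 4"
  using prime_dvd_mult_iff[OF assms(1), of 2 2] prime_odd_not_dvd_2[OF assms] by simp

definition m1_fixed_mod :: "int \<Rightarrow> int \<Rightarrow> int \<Rightarrow> int \<Rightarrow> bool" where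
  "m1_fixed_mod p a b c \<longleftrightarrow> p dvd b * c - 2 * a \<and> p dvd a^2 + b^2 + c^2 - a * b * c
     \<and> \<not> (p dvd a \<and> p dvd b \<and> p dvd c)"

lemma m1_fixed_mod_conic:
  assumes "m1_fixed_mod p a b c"
  shows "p dvd 4 * b^2 + 4 * c^2 - b^2 * c^2"
proof -
  have "4 * b^2 + 4 * c^2 - b^2 * c^2
      = 4 * (a^2 + b^2 + c^2 - a * b * c) - (b * c - 2 * a) * (b * c - 2 * a)"
    by (simp add: algebra_simps power2_eq_square)
  also have "p dvd \<dots>" using assms unfolding m1_fixed_mod_def by (metis dvd_diff dvd_mult)
  finally show ?thesis .
qed

context
  fixes p :: int
  assumes prime: "prime p" and odd: "odd p"
begin

lemma m1_fixed_mod_swap: "m1_fixed_mod p a b c \<Longrightarrow> m1_fixed_mod p a c b"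
  by (auto simp: m1_fixed_mod_def ac_simps)

lemma m1_fixed_mod_not_dvd:
  assumes fixed: "m1_fixed_mod p a b c"
  shows "\<not> p dvd b"
proof
  assume pb: "p dvd b"
  have "4 * b^2 + 4 * c^2 - b^2 * c^2 = 4 * c^2 + b * (4 * b - b * c^2)"
    by (simp add: algebra_simps power2_eq_square)
  with m1_fixed_mod_conic[OF fixed] pb have "p dvd 4 * c^2"
    by (metis dvd_add_left_iff dvd_mult2)
  then have pc: "p dvd c"
    using prime_odd_not_dvd_4[OF prime odd] prime_dvd_mult_iff[OF prime] prime_dvd_power[OF prime]
    by blast
  with pb fixed have "p dvd 2 * a"
    by (metis m1_fixed_mod_def dvd_diff_right_iff dvd_mult2)
  then have "p dvd a" using prime_odd_not_dvd_2[OF prime odd] prime_dvd_mult_iff[OF prime] by blast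
  with pb pc fixed show False by (simp add: m1_fixed_mod_def)
qed

lemma m1_fixed_mod_unit_product:
  assumes fixed: "m1_fixed_mod p a b c" and t: "p dvd c * t - 2 * b"
  shows "p dvd (b - t) * (b + t) - 4"
proof -
  have "c^2 * ((b - t) * (b + t) - 4) = - (4 * b^2 + 4 * c^2 - b^2 * c^2) - (c * t - 2 * b) * (c * t + 2 * b)"
    by (simp add: algebra_simps power2_eq_square)
  also have "p dvd \<dots>" using m1_fixed_mod_conic[OF fixed] t by (metis dvd_diff dvd_minus_iff dvd_mult2)
  finally show ?thesis
    using m1_fixed_mod_not_dvd[OF m1_fixed_mod_swap[OF fixed]]
      prime_dvd_mult_iff[OF prime] prime_dvd_power[OF prime] by blast
qed

lemma m1_fixed_mod_unit:
  assumes "m1_fixed_mod p a b c" "p dvd c * t - 2 * b"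
  shows "\<not> p dvd b - t"
  using m1_fixed_mod_unit_product[OF assms] prime_odd_not_dvd_4[OF prime odd]
  by (metis dvd_diff_right_iff dvd_mult2)

lemma m1_fixed_mod_determined_b:
  assumes fixed: "m1_fixed_mod p a b c" and t: "p dvd c * t - 2 * b"
    and fixed': "m1_fixed_mod p a' b' c'" and t': "p dvd c' * t' - 2 * b'"
    and s: "p dvd (b - t) - (b' - t')"
  shows "p dvd b - b'"
proof -
  have "(b - t) * ((b + t) - (b' + t'))
      = ((b - t) * (b + t) - 4) - ((b' - t') * (b' + t') - 4) - ((b - t) - (b' - t')) * (b' + t')"
    by (simp add: algebra_simps)
  also have "p dvd \<dots>"
    using m1_fixed_mod_unit_product[OF fixed t] m1_fixed_mod_unit_product[OF fixed' t'] s
    by (metis dvd_diff dvd_mult2)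
  finally have "p dvd (b + t) - (b' + t')"
    using m1_fixed_mod_unit[OF fixed t] prime_dvd_mult_iff[OF prime] by blast
  moreover have "2 * (b - b') = ((b + t) - (b' + t')) + ((b - t) - (b' - t'))"
    by (simp add: algebra_simps)
  ultimately have "p dvd 2 * (b - b')" using s by (metis dvd_add)
  then show ?thesis using prime_odd_not_dvd_2[OF prime odd] prime_dvd_mult_iff[OF prime] by blast
qed

lemma m1_fixed_mod_determined:
  assumes fixed: "m1_fixed_mod p a b c" and t: "p dvd c * t - 2 * b"
    and fixed': "m1_fixed_mod p a' b' c'" and t': "p dvd c' * t' - 2 * b'"
    and s: "p dvd (b - t) - (b' - t')"
  shows "p dvd a - a'" "p dvd b - b'" "p dvd c - c'"
proof -
  have n2: "\<not> p dvd 2" using prime_odd_not_dvd_2[OF prime odd] .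
  show b: "p dvd b - b'" by (rule m1_fixed_mod_determined_b[OF assms])
  have "t - t' = (b - b') - ((b - t) - (b' - t'))" by (simp add: algebra_simps)
  with b s have tt: "p dvd t - t'" by (metis dvd_diff)
  have "\<not> p dvd t"
  proof
    assume "p dvd t"
    then have "p dvd c * t" by simp
    with t have "p dvd 2 * b" by (metis dvd_diff_right_iff)
    with n2 m1_fixed_mod_not_dvd[OF fixed] show False using prime_dvd_mult_iff[OF prime] by blast
  qed
  moreover have "t * (c - c') = (c * t - 2 * b) - (c' * t' - 2 * b') + 2 * (b - b') - c' * (t - t')"
    by (simp add: algebra_simps)
  moreover have "p dvd (c * t - 2 * b) - (c' * t' - 2 * b') + 2 * (b - b') - c' * (t - t')"
    by (rule dvd_diff[OF dvd_add[OF dvd_diff[OF t t'] dvd_mult[OF b]] dvd_mult[OF tt]])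
  ultimately show c: "p dvd c - c'" using prime_dvd_mult_iff[OF prime] by metis
  have h: "p dvd b * c - 2 * a" and h': "p dvd b' * c' - 2 * a'"
    using fixed fixed' by (simp_all add: m1_fixed_mod_def)
  have "2 * (a - a') = (b' * c' - 2 * a') - (b * c - 2 * a) + (b - b') * c + b' * (c - c')"
    by (simp add: algebra_simps)
  also have "p dvd \<dots>"
    by (rule dvd_add[OF dvd_add[OF dvd_diff[OF h' h] dvd_mult2[OF b]] dvd_mult[OF c]])
  finally show "p dvd a - a'" using n2 prime_dvd_mult_iff[OF prime] by blast
qed

definition conic_coord :: "int \<Rightarrow> int \<Rightarrow> int" where
  "conic_coord b c = (b - 2 * b * modular_inverse p c) mod p"

lemma m1_fixed_mod_inverse:
  assumes "m1_fixed_mod p a b c"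
  shows "p dvd c * (2 * b * modular_inverse p c) - 2 * b"
proof -
  have "coprime c p"
    using prime_imp_coprime[OF prime m1_fixed_mod_not_dvd[OF m1_fixed_mod_swap[OF assms]]]
    by (simp add: coprime_commute)
  then have "p dvd c * modular_inverse p c - 1"
    using cong_modular_inverse1 cong_iff_dvd_diff by blast
  then have "p dvd 2 * b * (c * modular_inverse p c - 1)" by simp
  then show ?thesis by (simp add: algebra_simps)
qed

lemma card_fixed_points_markoff_move_1:
  "card {P \<in> markoff_set p. markoff_move p 1 P = P} \<le> nat (p - 1)"
proof -
  let ?F = "{P \<in> markoff_set p. markoff_move p 1 P = P}"
  let ?f = "\<lambda>(a, b, c). conic_coord b c"
  have p0: "0 < p" using prime prime_gt_0_int by blast
  have fixed: "m1_fixed_mod p a b c" if "(a, b, c) \<in> ?F" for a b c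
  proof -
    have "(b * c - a) mod p = a mod p" using that by (simp add: markoff_move_def markoff_set_def)
    then have "p dvd b * c - 2 * a" by (simp add: mod_eq_dvd_iff)
    with that residue_eq_if_dvd_diff[of _ p 0] show ?thesis
      by (auto simp: m1_fixed_mod_def markoff_set_iff markoff_set_dvd)
  qed
  have "(a, b, c) = (a', b', c')"
    if P: "(a, b, c) \<in> ?F" and P': "(a', b', c') \<in> ?F"
      and "conic_coord b c = conic_coord b' c'" for a b c a' b' c'
  proof -
    from that have "p dvd (b - 2 * b * modular_inverse p c) - (b' - 2 * b' * modular_inverse p c')"
      by (simp add: conic_coord_def mod_eq_dvd_iff)
    from m1_fixed_mod_determined[OF fixed[OF P] m1_fixed_mod_inverse[OF fixed[OF P]]
        fixed[OF P'] m1_fixed_mod_inverse[OF fixed[OF P']] this]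
    show ?thesis
      using P P' residue_eq_if_dvd_diff by (auto simp: markoff_set_iff)
  qed
  then have "inj_on ?f ?F" by (force simp: inj_on_def)
  moreover have "conic_coord b c \<in> {1..p - 1}" if "(a, b, c) \<in> ?F" for a b c
    using m1_fixed_mod_unit[OF fixed[OF that] m1_fixed_mod_inverse[OF fixed[OF that]]]
      pos_mod_sign[OF p0, of "b - 2 * b * modular_inverse p c"]
      pos_mod_bound[OF p0, of "b - 2 * b * modular_inverse p c"]
    by (auto simp: conic_coord_def dvd_eq_mod_eq_0)
  then have "?f ` ?F \<subseteq> {1..p - 1}" by force
  ultimately have "card ?F \<le> card {1..p - 1}" by (rule card_inj_on_le) simp
  then show ?thesis by simp
qed

lemma card_fixed_points_markoff_move:
  assumes "i \<in> {1, 2, 3}"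
  shows "card {P \<in> markoff_set p. markoff_move p i P = P} \<le> nat (p - 1)"
proof -
  have "card {P \<in> markoff_set p. markoff_move p i P = P}
      = card {P \<in> markoff_set p. markoff_move p 1 P = P}"
    unfolding markoff_move_conj_coord_swap[OF assms]
  proof (rule card_fixed_points_conjugate)
    show "markoff_move p 1 \<in> markoff_set p \<rightarrow> markoff_set p"
      using markoff_move_in_markoff_set[OF prime_gt_0_int[OF prime]] by blast
  qed (simp_all add: coord_swap_in_markoff_set coord_swap_involutive)
  then show ?thesis using card_fixed_points_markoff_move_1 by simp
qed

end

theorem lemma6p4:
  fixes p :: int and g :: "nat list"
  assumes "prime p" and "odd p"
    and "g \<in> carrier markoff_group"
    and "g \<noteq> \<one>\<^bsub>markoff_group\<^esub>"
    and "\<exists>n::nat. n > 0 \<and> g [^]\<^bsub>markoff_group\<^esub> n = \<one>\<^bsub>markoff_group\<^esub>"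
  shows "int (card {P \<in> markoff_set p. markoff_act p g P = P}) < p"
proof -
  have p0: "0 < p" using assms(1) prime_gt_0_int by blast
  have one: "\<one>\<^bsub>markoff_group\<^esub> = []" by (simp add: markoff_group_def)
  obtain n :: nat where n: "n > 0" "g [^]\<^bsub>markoff_group\<^esub> n = []"
    using assms(5) unfolding one by blast
  have "g \<noteq> []" using assms(4) unfolding one .
  then obtain u i where g: "g = u @ [i] @ rev u" and i: "i \<in> {1, 2, 3}"
    by (rule markoff_group_torsion_conjugate_generator[OF assms(3) _ n])
  have "card {P \<in> markoff_set p. markoff_act p g P = P}
      = card {P \<in> markoff_set p. markoff_move p i P = P}"
    using card_fixed_points_markoff_act_conjugate[OF p0, of u "[i]"]
    by (simp add: g markoff_act_Cons markoff_act_Nil)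
  also have "\<dots> \<le> nat (p - 1)" by (rule card_fixed_points_markoff_move[OF assms(1,2) i])
  finally show ?thesis using p0 by linarith
qed

end
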